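(* Let $d\ge1$. For all disjoint rectangles $P,Q\subseteq[0,1)^d$ that are translates of each other, the rectangle transposition $\tau_{P,Q}$ is a finite product of restricted shuffles in $\operatorname{Rec}_d$.
   Context: A rectangle in $\mathbb{R}^d$ is a set $\prod_{i=1}^d[a_i,b_i)$ with $a_i<b_i$ real. $\operatorname{Rec}_d$ is the group of bijections $f$ of $[0,1)^d$ for which there is a finite partition of $[0,1)^d$ into rectangles on each of which $f$ is a translation. For disjoint rectangles $P,Q$ with $Q=P+v$, $\tau_{P,Q}$ is translation by $v$ on $P$, by $-v$ on $Q$, and the identity elsewhere. A restricted shuffle: for a rectangle $P=\prod_j[a_j,b_j)\subseteq[0,1)^d$, an index $i$ and $c\in(a_i,b_i)$, let $P'$ (resp. $P''$) be obtained from $P$ by replacing $[a_i,b_i)$ by $[a_i,c)$ (resp. $[c,b_i)$); the restricted shuffle is translation by $(b_i-c)e_i$ on $P'$, by $-(c-a_i)e_i$ on $P''$, and the identity outside $P$ ($e_i$ the standard basis vector). *)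

theory Defs
  imports "HOL-Analysis.Analysis"
begin

text \<open>Points of R^d are vectors of type real^'d, 'd a finite (hence nonempty) index type,
  so d = CARD('d) \<ge> 1 is arbitrary.\<close>

definition unit_cube :: "(real^'d) set" where
  "unit_cube = {x. \<forall>i. 0 \<le> x$i \<and> x$i < 1}"

definition hbox :: "real^'d \<Rightarrow> real^'d \<Rightarrow> (real^'d) set" where
  "hbox a b = {x. \<forall>i. a$i \<le> x$i \<and> x$i < b$i}"

definition is_rectangle :: "(real^'d) set \<Rightarrow> bool" where
  "is_rectangle P \<longleftrightarrow> (\<exists>a b. (\<forall>i. a$i < b$i) \<and> P = hbox a b)"

definition rect_transp :: "(real^'d) set \<Rightarrow> (real^'d) set \<Rightarrow> real^'d \<Rightarrow> real^'d \<Rightarrow> real^'d" where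
  "rect_transp P Q v x = (if x \<in> P then x + v else if x \<in> Q then x - v else x)"

definition restricted_shuffle :: "real^'d \<Rightarrow> real^'d \<Rightarrow> 'd \<Rightarrow> real \<Rightarrow> real^'d \<Rightarrow> real^'d" where
  "restricted_shuffle a b i c x =
     (if x \<in> hbox a (\<chi> j. if j = i then c else b$j) then x + (b$i - c) *\<^sub>R axis i 1
      else if x \<in> hbox (\<chi> j. if j = i then c else a$j) b then x - (c - a$i) *\<^sub>R axis i 1
      else x)"

definition is_restricted_shuffle :: "(real^'d \<Rightarrow> real^'d) \<Rightarrow> bool" where
  "is_restricted_shuffle f \<longleftrightarrow>
     (\<exists>a b i c. (\<forall>j. a$j < b$j) \<and> hbox a b \<subseteq> unit_cube \<and> a$i < c \<and> c < b$i
        \<and> f = restricted_shuffle a b i c)"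

end

theory Submission
  imports Defs
begin

text \<open>A transposition of a box with its translate along one axis, at distance at least the
  width of the box in that direction, is a product of one or two restricted shuffles, each of which
  acts on the moving coordinate as a rotation of an interval. A displacement whose every nonzero component is at least the
  corresponding width is performed one axis at a time, through the conjugation
  \<open>\<tau>\<^sub>P\<^sub>Q = \<tau>\<^sub>P\<^sub>R \<tau>\<^sub>R\<^sub>Q \<tau>\<^sub>P\<^sub>R\<close>, where all intermediate boxes stay pairwise disjoint. In general, a
  box is cut along a coordinate in which the displacement is shorter than the width; the
  transposition of a disjoint union of boxes with its translate is the product of the
  transpositions of the pieces, and the number of cuts still needed strictly decreases.\<close>

lemma axis_one_nth [simp]: "axis i (1::real) $ j = (if j = i then 1 else 0)"
  by (simp add: axis_def)

lemma mem_translate_iff: "x \<in> (\<lambda>y. y + v) ` S \<longleftrightarrow> x - v \<in> (S :: 'a::ab_group_add set)"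
  by (auto intro: image_eqI[of _ _ "x - v"])

lemma image_translate_hbox: "(\<lambda>x. x + v) ` hbox a b = hbox (a + v) (b + v)"
  by (auto simp: mem_translate_iff hbox_def algebra_simps)

lemma hbox_translate_disjoint:
  assumes "b$j - a$j \<le> \<bar>v$j\<bar>"
  shows "hbox a b \<inter> hbox (a + v) (b + v) = {}"
  using assms by (auto simp: hbox_def abs_if dest!: spec[of _ j] split: if_split_asm)

definition box_in_unit_cube :: "real^'d \<Rightarrow> real^'d \<Rightarrow> bool" where
  "box_in_unit_cube a b \<longleftrightarrow> (\<forall>j. 0 \<le> a$j \<and> b$j \<le> 1)"

lemma hbox_subset_unit_cube_iff:
  assumes "\<forall>j. a$j < b$j"
  shows "hbox a b \<subseteq> unit_cube \<longleftrightarrow> box_in_unit_cube a b"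
proof
  assume sub: "hbox a b \<subseteq> unit_cube"
  show "box_in_unit_cube a b"
    unfolding box_in_unit_cube_def
  proof (intro allI conjI)
    fix j
    have "a \<in> hbox a b" using assms by (auto simp: hbox_def)
    then show "0 \<le> a$j" using sub by (auto simp: unit_cube_def)
    show "b$j \<le> 1"
    proof (rule ccontr)
      assume "\<not> b$j \<le> 1"
      then have "(\<chi> k. if k = j then max (a$j) 1 else a$k) \<in> hbox a b"
        using assms by (auto simp: hbox_def)
      then have "(\<chi> k. if k = j then max (a$j) 1 else a$k) \<in> unit_cube" using sub by blast
      then show False by (auto simp: unit_cube_def dest: spec[of _ j])
    qed
  qed
next
  assume cube: "box_in_unit_cube a b"
  show "hbox a b \<subseteq> unit_cube"
  proof
    fix x
    assume x: "x \<in> hbox a b"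
    have "0 \<le> x$j \<and> x$j < 1" for j
    proof -
      have "a$j \<le> x$j" "x$j < b$j" "0 \<le> a$j" "b$j \<le> 1"
        using x cube by (simp_all add: hbox_def box_in_unit_cube_def)
      then show ?thesis by linarith
    qed
    then show "x \<in> unit_cube" by (simp add: unit_cube_def)
  qed
qed

lemma box_in_unit_cube_mono:
  assumes "box_in_unit_cube a b" "\<forall>k. a$k \<le> a'$k \<and> b'$k \<le> b$k"
  shows "box_in_unit_cube a' b'"
  using assms unfolding box_in_unit_cube_def by (meson order_trans)

lemma hbox_mono:
  assumes "\<forall>k. a$k \<le> a'$k \<and> b'$k \<le> b$k"
  shows "hbox a' b' \<subseteq> hbox a b"
proof
  fix x
  assume x: "x \<in> hbox a' b'"
  have "a$k \<le> x$k \<and> x$k < b$k" for k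
  proof -
    have "a'$k \<le> x$k" "x$k < b'$k" using x by (simp_all add: hbox_def)
    then show ?thesis using assms[rule_format, of k] by linarith
  qed
  then show "x \<in> hbox a b" by (simp add: hbox_def)
qed

definition coord_upd :: "real^'d \<Rightarrow> 'd \<Rightarrow> real \<Rightarrow> real^'d" where
  "coord_upd x j c = (\<chi> k. if k = j then c else x$k)"

lemma coord_upd_nth [simp]: "coord_upd x j c $ k = (if k = j then c else x$k)"
  by (simp add: coord_upd_def)

lemma rect_transp_zero: "rect_transp P Q 0 = id"
  by (auto simp: rect_transp_def fun_eq_iff)

lemma rect_transp_swap:
  assumes "P \<inter> Q = {}"
  shows "rect_transp P Q v = rect_transp Q P (- v)"
  using assms by (auto simp: rect_transp_def fun_eq_iff)

lemma rect_transp_conj: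
  assumes "P \<inter> R = {}" "R \<inter> Q = {}" "P \<inter> Q = {}"
    and R: "R = (\<lambda>x. x + u) ` P" and Q: "Q = (\<lambda>x. x + w) ` R"
  shows "rect_transp P Q (u + w) = rect_transp P R u \<circ> rect_transp R Q w \<circ> rect_transp P R u"
proof
  fix x
  have PR: "x \<in> P \<longleftrightarrow> x + u \<in> R" and RQ: "x \<in> R \<longleftrightarrow> x + w \<in> Q" for x
    unfolding R Q mem_translate_iff by simp_all
  consider "x \<in> P" | "x \<in> R" | "x \<in> Q" | "x \<notin> P \<union> Q \<union> R" by blast
  then show "rect_transp P Q (u + w) x = (rect_transp P R u \<circ> rect_transp R Q w \<circ> rect_transp P R u) x"
  proof cases
    case 1
    then show ?thesis using assms(1-3) PR[of x] RQ[of "x + u"] by (auto simp: rect_transp_def add.assoc)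
  next
    case 2
    then show ?thesis using assms(1-3) PR[of "x - u"] by (auto simp: rect_transp_def)
  next
    case 3
    then show ?thesis using assms(1-3) PR[of "x - w - u"] RQ[of "x - w"]
      by (auto simp: rect_transp_def algebra_simps)
  qed (simp add: rect_transp_def)
qed

lemma rect_transp_split:
  assumes "P1 \<inter> P2 = {}" and "(P1 \<union> P2) \<inter> (\<lambda>x. x + v) ` (P1 \<union> P2) = {}"
  shows "rect_transp (P1 \<union> P2) ((\<lambda>x. x + v) ` (P1 \<union> P2)) v
    = rect_transp P1 ((\<lambda>x. x + v) ` P1) v \<circ> rect_transp P2 ((\<lambda>x. x + v) ` P2) v"
  using assms by (auto simp: rect_transp_def fun_eq_iff mem_translate_iff)

definition shuffle_product :: "(real^'d \<Rightarrow> real^'d) \<Rightarrow> bool" where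
  "shuffle_product f \<longleftrightarrow> (\<exists>fs. (\<forall>g\<in>set fs. is_restricted_shuffle g) \<and> f = foldr (\<circ>) fs id)"

lemma shuffle_product_id: "shuffle_product id"
  unfolding shuffle_product_def by (intro exI[of _ "[]"]) simp

lemma shuffle_product_comp:
  assumes "shuffle_product f" "shuffle_product g"
  shows "shuffle_product (f \<circ> g)"
proof -
  obtain fs gs where "\<forall>h\<in>set (fs @ gs). is_restricted_shuffle h"
    and "f = foldr (\<circ>) fs id" "g = foldr (\<circ>) gs id"
    using assms unfolding shuffle_product_def by auto
  moreover have "foldr (\<circ>) (fs @ gs) id = foldr (\<circ>) fs id \<circ> foldr (\<circ>) gs id"
    by (induction fs) auto
  ultimately show ?thesis unfolding shuffle_product_def by metis
qed

lemma shuffle_product_restricted_shuffle: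
  assumes "\<forall>j. a$j < b$j" "box_in_unit_cube a b" "a$i < c" "c < b$i"
  shows "shuffle_product (restricted_shuffle a b i c)"
  unfolding shuffle_product_def
  using assms hbox_subset_unit_cube_iff[OF assms(1)]
  by (intro exI[of _ "[restricted_shuffle a b i c]"]) (auto simp: is_restricted_shuffle_def)

text \<open>Off the slab of points that lie in \<open>hbox a b\<close> in every coordinate but \<open>i\<close>, restricted
  shuffles in direction \<open>i\<close> and transpositions of a box with its translate along \<open>axis i 1\<close>
  are the identity; on it they move points along \<open>axis i 1\<close> by a displacement depending only on
  the \<open>i\<close>-th coordinate. Composites of such maps thus reduce to identities between real functions.\<close>

definition in_slab :: "real^'d \<Rightarrow> real^'d \<Rightarrow> 'd \<Rightarrow> real^'d \<Rightarrow> bool" where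
  "in_slab a b i x \<longleftrightarrow> (\<forall>j. j \<noteq> i \<longrightarrow> a$j \<le> x$j \<and> x$j < b$j)"

definition axis_move :: "real^'d \<Rightarrow> real^'d \<Rightarrow> 'd \<Rightarrow> (real \<Rightarrow> real) \<Rightarrow> real^'d \<Rightarrow> real^'d" where
  "axis_move a b i \<delta> x = (if in_slab a b i x then x + \<delta> (x$i) *\<^sub>R axis i 1 else x)"

lemma in_slab_axis_shift [simp]: "in_slab a b i (x + s *\<^sub>R axis i 1) \<longleftrightarrow> in_slab a b i x"
  by (simp add: in_slab_def)

lemma in_slab_cong:
  assumes "\<forall>j. j \<noteq> i \<longrightarrow> a'$j = a$j \<and> b'$j = b$j"
  shows "in_slab a' b' i = in_slab a b i"
  using assms by (auto simp: in_slab_def fun_eq_iff)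

lemma mem_hbox_iff_in_slab: "x \<in> hbox a b \<longleftrightarrow> in_slab a b i x \<and> a$i \<le> x$i \<and> x$i < b$i"
proof
  assume "in_slab a b i x \<and> a$i \<le> x$i \<and> x$i < b$i"
  then have "a$j \<le> x$j \<and> x$j < b$j" for j by (cases "j = i") (auto simp: in_slab_def)
  then show "x \<in> hbox a b" by (simp add: hbox_def)
qed (simp add: hbox_def in_slab_def)

lemma axis_move_comp:
  "axis_move a b i \<delta> \<circ> axis_move a b i \<gamma> = axis_move a b i (\<lambda>s. \<gamma> s + \<delta> (s + \<gamma> s))"
  by (auto simp: axis_move_def fun_eq_iff algebra_simps)

lemma axis_move_cong:
  assumes "\<forall>j. j \<noteq> i \<longrightarrow> a'$j = a$j \<and> b'$j = b$j"
  shows "axis_move a' b' i = axis_move a b i"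
  unfolding axis_move_def in_slab_cong[OF assms] ..

definition rotation_disp :: "real \<Rightarrow> real \<Rightarrow> real \<Rightarrow> real \<Rightarrow> real" where
  "rotation_disp \<alpha> c \<beta> s = (if \<alpha> \<le> s \<and> s < c then \<beta> - c else if c \<le> s \<and> s < \<beta> then \<alpha> - c else 0)"

definition swap_disp :: "real \<Rightarrow> real \<Rightarrow> real \<Rightarrow> real \<Rightarrow> real" where
  "swap_disp \<alpha> \<beta> t s = (if \<alpha> \<le> s \<and> s < \<beta> then t else if \<alpha> + t \<le> s \<and> s < \<beta> + t then - t else 0)"

lemma restricted_shuffle_eq_axis_move:
  "restricted_shuffle a b i c = axis_move a b i (rotation_disp (a$i) c (b$i))"
proof -
  have "in_slab a (\<chi> j. if j = i then c else b$j) i = in_slab a b i"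
       "in_slab (\<chi> j. if j = i then c else a$j) b i = in_slab a b i"
    by (simp_all add: in_slab_cong)
  then show ?thesis
    unfolding restricted_shuffle_def axis_move_def rotation_disp_def fun_eq_iff
      mem_hbox_iff_in_slab[where i = i]
    by (auto simp: algebra_simps)
qed

definition box_transp :: "real^'d \<Rightarrow> real^'d \<Rightarrow> real^'d \<Rightarrow> real^'d \<Rightarrow> real^'d" where
  "box_transp a b v = rect_transp (hbox a b) (hbox (a + v) (b + v)) v"

lemma box_transp_axis_eq_axis_move:
  "box_transp a b (t *\<^sub>R axis i 1) = axis_move a b i (swap_disp (a$i) (b$i) t)"
proof -
  have "in_slab (a + t *\<^sub>R axis i 1) (b + t *\<^sub>R axis i 1) i = in_slab a b i"
    by (simp add: in_slab_cong)
  then show ?thesis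
    unfolding box_transp_def rect_transp_def axis_move_def swap_disp_def fun_eq_iff
      mem_hbox_iff_in_slab[where i = i]
    by (auto simp: algebra_simps)
qed

lemma swap_disp_eq_rotation_disp:
  "swap_disp \<alpha> \<beta> (\<beta> - \<alpha>) = rotation_disp \<alpha> \<beta> (2 * \<beta> - \<alpha>)"
  by (auto simp: swap_disp_def rotation_disp_def fun_eq_iff)

text \<open>The first rotation brings the far copy \<open>[\<alpha>+t, \<beta>+t)\<close> home to \<open>[\<alpha>, \<beta>)\<close> and lifts
  \<open>[\<alpha>, \<alpha>+t)\<close> by the width \<open>\<beta>-\<alpha>\<close>; the second rotation, on \<open>[\<beta>, \<beta>+t)\<close>, then moves the
  lifted copy of \<open>[\<alpha>, \<beta>)\<close> to the top and shifts the rest back down.\<close>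

lemma swap_disp_eq_rotations:
  assumes "\<alpha> < \<beta>" "\<beta> - \<alpha> < t"
  shows "swap_disp \<alpha> \<beta> t = (\<lambda>s. rotation_disp \<alpha> (\<alpha> + t) (\<beta> + t) s
     + rotation_disp \<beta> (2 * \<beta> - \<alpha>) (\<beta> + t) (s + rotation_disp \<alpha> (\<alpha> + t) (\<beta> + t) s))"
proof
  fix s
  consider "s < \<alpha>" | "\<alpha> \<le> s" "s < \<beta>" | "\<beta> \<le> s" "s < \<alpha> + t"
    | "\<alpha> + t \<le> s" "s < \<beta> + t" | "\<beta> + t \<le> s" by linarith
  then show "swap_disp \<alpha> \<beta> t s = rotation_disp \<alpha> (\<alpha> + t) (\<beta> + t) s
     + rotation_disp \<beta> (2 * \<beta> - \<alpha>) (\<beta> + t) (s + rotation_disp \<alpha> (\<alpha> + t) (\<beta> + t) s)"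
    by cases (use assms in \<open>simp_all add: swap_disp_def rotation_disp_def\<close>)
qed

lemma shuffle_product_axis_transp_nonneg:
  assumes ab: "\<forall>j. a$j < b$j" and cube: "box_in_unit_cube a b"
    and cube': "box_in_unit_cube (a + t *\<^sub>R axis i 1) (b + t *\<^sub>R axis i 1)"
    and wt: "b$i - a$i \<le> t"
  shows "shuffle_product (box_transp a b (t *\<^sub>R axis i 1))"
proof -
  define b' where "b' = b + t *\<^sub>R axis i 1"
  have ab': "\<forall>j. a$j < b'$j"
  proof
    fix j
    show "a$j < b'$j" using ab[rule_format, of j] ab[rule_format, of i] wt
      unfolding b'_def by (cases "j = i") auto
  qed
  have cube_ab': "box_in_unit_cube a b'" using cube cube' by (simp add: box_in_unit_cube_def b'_def)
  have b'i: "b'$i = b$i + t" by (simp add: b'_def)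
  have off_i: "\<forall>j. j \<noteq> i \<longrightarrow> a$j = a$j \<and> b'$j = b$j" by (simp add: b'_def)
  show ?thesis
  proof (cases "t = b$i - a$i")
    case True
    then have "box_transp a b (t *\<^sub>R axis i 1) = restricted_shuffle a b' i (b$i)"
      using swap_disp_eq_rotation_disp[of "a$i" "b$i"]
      by (simp add: box_transp_axis_eq_axis_move restricted_shuffle_eq_axis_move
          axis_move_cong[OF off_i] b'i)
    then show ?thesis
      using ab ab' cube_ab' b'i True by (simp add: shuffle_product_restricted_shuffle)
  next
    case False
    define a2 where "a2 = a + (b$i - a$i) *\<^sub>R axis i 1"
    have a2i: "a2$i = b$i" by (simp add: a2_def)
    have off_i2: "\<forall>j. j \<noteq> i \<longrightarrow> a2$j = a$j \<and> b'$j = b$j" by (simp add: a2_def b'_def)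
    have wi: "a$i < b$i" "b$i - a$i < t" using ab False wt by auto
    have "a2$j < b'$j \<and> 0 \<le> a2$j" for j
      using ab'[rule_format, of j] cube_ab'[unfolded box_in_unit_cube_def, rule_format, of j] wi b'i
      by (cases "j = i") (simp_all add: a2_def)
    then have ab2: "\<forall>j. a2$j < b'$j" and cube2: "box_in_unit_cube a2 b'"
      using cube_ab' by (auto simp: box_in_unit_cube_def)
    have "box_transp a b (t *\<^sub>R axis i 1)
        = restricted_shuffle a2 b' i (2 * b$i - a$i) \<circ> restricted_shuffle a b' i (a$i + t)"
      using swap_disp_eq_rotations[OF wi]
      by (simp add: box_transp_axis_eq_axis_move restricted_shuffle_eq_axis_move
          axis_move_cong[OF off_i] axis_move_cong[OF off_i2] axis_move_comp a2i b'i)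
    moreover have "shuffle_product (restricted_shuffle a b' i (a$i + t))"
      using wi b'i by (intro shuffle_product_restricted_shuffle[OF ab' cube_ab']) auto
    moreover have "shuffle_product (restricted_shuffle a2 b' i (2 * b$i - a$i))"
      using wi a2i b'i by (intro shuffle_product_restricted_shuffle[OF ab2 cube2]) auto
    ultimately show ?thesis by (simp add: shuffle_product_comp)
  qed
qed

lemma shuffle_product_axis_transp:
  assumes ab: "\<forall>j. a$j < b$j" and cube: "box_in_unit_cube a b"
    and cube': "box_in_unit_cube (a + t *\<^sub>R axis i 1) (b + t *\<^sub>R axis i 1)"
    and wt: "b$i - a$i \<le> \<bar>t\<bar>"
  shows "shuffle_product (box_transp a b (t *\<^sub>R axis i 1))"
proof (cases "0 \<le> t")
  case True
  then show ?thesis using shuffle_product_axis_transp_nonneg[OF assms(1-3)] wt by simp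
next
  case False
  define v where "v = t *\<^sub>R axis i (1::real)"
  have disj: "hbox a b \<inter> hbox (a + v) (b + v) = {}"
    using hbox_translate_disjoint[of b i a v] wt by (simp add: v_def)
  have "box_transp a b v = box_transp (a + v) (b + v) ((- t) *\<^sub>R axis i 1)"
    unfolding box_transp_def rect_transp_swap[OF disj] by (simp add: v_def)
  moreover have "shuffle_product (box_transp (a + v) (b + v) ((- t) *\<^sub>R axis i 1))"
    using ab cube cube' wt False
    by (intro shuffle_product_axis_transp_nonneg) (simp_all add: v_def)
  ultimately show ?thesis by (simp add: v_def)
qed

lemma shuffle_product_box_transp_separated:
  assumes "\<forall>j. a$j < b$j" "box_in_unit_cube a b" "box_in_unit_cube (a + v) (b + v)"
    and "\<forall>j. v$j \<noteq> 0 \<longrightarrow> b$j - a$j \<le> \<bar>v$j\<bar>"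
  shows "shuffle_product (box_transp a b v)"
  using assms
proof (induction "card {j. v$j \<noteq> 0}" arbitrary: a b v)
  case 0
  then have "v = 0" by (simp add: vec_eq_iff)
  then have "box_transp a b v = id" by (simp add: box_transp_def rect_transp_zero)
  then show ?case by (simp only: shuffle_product_id)
next
  case (Suc n)
  then obtain k where vk: "v$k \<noteq> 0" by (metis (mono_tags) Collect_empty_eq card.empty nat.distinct(1))
  define v1 where "v1 = v$k *\<^sub>R axis k (1::real)"
  define v2 where "v2 = v - v1"
  have wk: "b$k - a$k \<le> \<bar>v$k\<bar>" using Suc.prems(4) vk by blast
  have cube1: "box_in_unit_cube (a + v1) (b + v1)"
    using Suc.prems(2,3) by (simp add: box_in_unit_cube_def v1_def)
  have S1: "shuffle_product (box_transp a b v1)"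
    unfolding v1_def using Suc.prems(1,2) cube1 wk
    by (intro shuffle_product_axis_transp) (simp_all add: v1_def)
  show ?case
  proof (cases "v2 = 0")
    case True
    then show ?thesis using S1 by (simp add: v2_def)
  next
    case False
    have supp2: "{j. v2$j \<noteq> 0} = {j. v$j \<noteq> 0} - {k}" by (auto simp: v2_def v1_def)
    have S2: "shuffle_product (box_transp (a + v1) (b + v1) v2)"
    proof (rule Suc.hyps)
      show "n = card {j. v2$j \<noteq> 0}"
        unfolding supp2 using Suc.hyps(2) vk by (simp add: card_Diff_singleton)
    qed (use Suc.prems cube1 in \<open>simp_all add: v2_def v1_def\<close>)
    obtain j where vj: "v2$j \<noteq> 0" using False by (auto simp: vec_eq_iff)
    have sum: "v1 + v2 = v" "a + v1 + v2 = a + v" "b + v1 + v2 = b + v" by (simp_all add: v2_def)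
    have "hbox a b \<inter> hbox (a + v1) (b + v1) = {}"
      by (rule hbox_translate_disjoint[of b k]) (use wk in \<open>simp add: v1_def\<close>)
    moreover have "hbox (a + v1) (b + v1) \<inter> hbox (a + v) (b + v) = {}"
      using hbox_translate_disjoint[of "b + v1" j "a + v1" v2] Suc.prems(4) vj
      by (simp add: sum v2_def v1_def split: if_splits)
    moreover have "hbox a b \<inter> hbox (a + v) (b + v) = {}"
      by (rule hbox_translate_disjoint[of b k]) (use wk in simp)
    ultimately have "box_transp a b v
        = box_transp a b v1 \<circ> box_transp (a + v1) (b + v1) v2 \<circ> box_transp a b v1"
      unfolding box_transp_def sum
      by (subst sum(1)[symmetric], rule rect_transp_conj)
        (simp_all add: image_translate_hbox sum)
    then show ?thesis using S1 S2 by (simp add: shuffle_product_comp)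
  qed
qed

lemma box_transp_split:
  assumes "a$j \<le> c" "c \<le> b$j" and disj: "hbox a b \<inter> hbox (a + v) (b + v) = {}"
  shows "box_transp a b v = box_transp a (coord_upd b j c) v \<circ> box_transp (coord_upd a j c) b v"
proof -
  have "in_slab a (coord_upd b j c) j = in_slab a b j" "in_slab (coord_upd a j c) b j = in_slab a b j"
    by (simp_all add: in_slab_cong)
  then have "x \<in> hbox a (coord_upd b j c) \<longleftrightarrow> x \<in> hbox a b \<and> x$j < c"
    and "x \<in> hbox (coord_upd a j c) b \<longleftrightarrow> x \<in> hbox a b \<and> c \<le> x$j" for x
    using assms(1,2) unfolding mem_hbox_iff_in_slab[where i = j] by auto
  then have split: "hbox a b = hbox a (coord_upd b j c) \<union> hbox (coord_upd a j c) b"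
    and pieces_disj: "hbox a (coord_upd b j c) \<inter> hbox (coord_upd a j c) b = {}"
    by auto
  show ?thesis
    using disj unfolding box_transp_def image_translate_hbox[symmetric] split
    by (rule rect_transp_split[OF pieces_disj])
qed

definition cut_count :: "real^'d \<Rightarrow> real^'d \<Rightarrow> real^'d \<Rightarrow> nat" where
  "cut_count v a b = (\<Sum>j\<in>UNIV. if v$j = 0 then 0 else nat \<lceil>(b$j - a$j) / \<bar>v$j\<bar>\<rceil>)"

lemma cut_count_less:
  assumes "\<forall>k. k \<noteq> j \<longrightarrow> a'$k = a$k \<and> b'$k = b$k" and "v$j \<noteq> 0"
    and "nat \<lceil>(b'$j - a'$j) / \<bar>v$j\<bar>\<rceil> < nat \<lceil>(b$j - a$j) / \<bar>v$j\<bar>\<rceil>"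
  shows "cut_count v a' b' < cut_count v a b"
proof -
  let ?n = "\<lambda>a b k. if v$k = 0 then 0 else nat \<lceil>(b$k - a$k) / \<bar>v$k\<bar>\<rceil>"
  have "sum (?n a' b') (UNIV - {j}) = sum (?n a b) (UNIV - {j})"
    using assms(1) by (intro sum.cong) auto
  then show ?thesis
    using assms(2,3) by (simp add: cut_count_def sum.remove[of UNIV j])
qed

lemma shuffle_product_box_transp:
  assumes "\<forall>j. a$j < b$j" "box_in_unit_cube a b" "box_in_unit_cube (a + v) (b + v)"
    and "hbox a b \<inter> hbox (a + v) (b + v) = {}"
  shows "shuffle_product (box_transp a b v)"
  using assms
proof (induction "cut_count v a b" arbitrary: a b rule: less_induct)
  case less
  show ?case
  proof (cases "\<forall>j. v$j \<noteq> 0 \<longrightarrow> b$j - a$j \<le> \<bar>v$j\<bar>")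
    case True
    with less.prems show ?thesis by (simp add: shuffle_product_box_transp_separated)
  next
    case False
    then obtain j where vj: "v$j \<noteq> 0" and wj: "\<bar>v$j\<bar> < b$j - a$j" by force
    define c where "c = a$j + \<bar>v$j\<bar>"
    have subbox: "shuffle_product (box_transp a' b' v)"
      if "\<forall>k. a$k \<le> a'$k \<and> a'$k < b'$k \<and> b'$k \<le> b$k" "cut_count v a' b' < cut_count v a b"
      for a' b'
    proof (rule less.hyps[OF that(2)])
      show "\<forall>k. a'$k < b'$k" using that(1) by blast
      show "box_in_unit_cube a' b'" "box_in_unit_cube (a' + v) (b' + v)"
        using box_in_unit_cube_mono[OF less.prems(2)] box_in_unit_cube_mono[OF less.prems(3)] that(1)
        by simp_all
      have "hbox a' b' \<subseteq> hbox a b" "hbox (a' + v) (b' + v) \<subseteq> hbox (a + v) (b + v)"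
        using that(1) by (simp_all add: hbox_mono)
      then show "hbox a' b' \<inter> hbox (a' + v) (b' + v) = {}" using less.prems(4) by blast
    qed
    have ratio: "1 < (b$j - a$j) / \<bar>v$j\<bar>" using vj wj by simp
    have "nat \<lceil>(c - a$j) / \<bar>v$j\<bar>\<rceil> < nat \<lceil>(b$j - a$j) / \<bar>v$j\<bar>\<rceil>"
      using vj ratio by (simp add: c_def less_ceiling_iff)
    then have S1: "shuffle_product (box_transp a (coord_upd b j c) v)"
      using less.prems(1) vj wj
      by (intro subbox cut_count_less[of j]) (auto simp: c_def)
    have "(b$j - c) / \<bar>v$j\<bar> = (b$j - a$j) / \<bar>v$j\<bar> - 1"
      using vj by (simp add: c_def field_simps)
    then have "\<lceil>(b$j - c) / \<bar>v$j\<bar>\<rceil> = \<lceil>(b$j - a$j) / \<bar>v$j\<bar>\<rceil> - 1" by simp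
    moreover have "1 < \<lceil>(b$j - a$j) / \<bar>v$j\<bar>\<rceil>" using ratio by (simp add: less_ceiling_iff)
    ultimately have "nat \<lceil>(b$j - c) / \<bar>v$j\<bar>\<rceil> < nat \<lceil>(b$j - a$j) / \<bar>v$j\<bar>\<rceil>" by simp
    then have S2: "shuffle_product (box_transp (coord_upd a j c) b v)"
      using less.prems(1) vj wj
      by (intro subbox cut_count_less[of j]) (auto simp: c_def)
    have "c \<le> b$j" using wj by (simp add: c_def)
    then show ?thesis
      using box_transp_split[of a j c b v] less.prems(4) S1 S2
      by (simp add: c_def shuffle_product_comp)
  qed
qed

theorem mainTheorem17:
  fixes P Q :: "(real^'d) set" and v :: "real^'d"
  assumes "is_rectangle P" and "is_rectangle Q"
    and "P \<subseteq> unit_cube" and "Q \<subseteq> unit_cube"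
    and "P \<inter> Q = {}"
    and "Q = (\<lambda>x. x + v) ` P"
  shows "\<exists>fs. (\<forall>f\<in>set fs. is_restricted_shuffle f) \<and>
           (\<forall>x\<in>unit_cube. rect_transp P Q v x = foldr (\<circ>) fs id x)"
proof -
  obtain a b where ab: "\<forall>i. a$i < b$i" and P: "P = hbox a b"
    using assms(1) unfolding is_rectangle_def by blast
  have Q: "Q = hbox (a + v) (b + v)" using assms(6) P by (simp add: image_translate_hbox)
  have abv: "\<forall>i. (a + v)$i < (b + v)$i" using ab by simp
  have cube: "box_in_unit_cube a b" using assms(3) P hbox_subset_unit_cube_iff[OF ab] by simp
  have cube': "box_in_unit_cube (a + v) (b + v)" using assms(4) Q hbox_subset_unit_cube_iff[OF abv] by simp
  have "shuffle_product (box_transp a b v)"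
    by (rule shuffle_product_box_transp[OF ab cube cube']) (use assms(5) P Q in simp)
  then obtain fs where "\<forall>f\<in>set fs. is_restricted_shuffle f" "rect_transp P Q v = foldr (\<circ>) fs id"
    unfolding shuffle_product_def box_transp_def P Q by blast
  then show ?thesis by auto
qed

end
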